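(* Let $R$ be a skew invertible R-matrix on $V\otimes V$. Define $J_1=I$, $J_{k+1}=R_kJ_kR_k$ and $\Upsilon^{(1)}_R=1$, $\Upsilon^{(k+1)}_R=(R_1R_2\cdots R_k)\Upsilon^{(k)}_R$ for $k\ge1$. Then for every $i\ge1$, $$\mathrm{Tr}_{R(i+1,\dots,2i)}\,\Upsilon^{(2i)}_R=\bigl(\Upsilon^{(i)}_R\bigr)^4=\bigl(J_1J_2\cdots J_i\bigr)^2 .$$
   Context: $V$ is a finite-dimensional complex vector space, $I=\mathrm{id}_V$, $P$ the flip. For an operator $X$ on $V\otimes V$, $X_k$ acts in tensor factors $k,k+1$ of $V^{\otimes m}$ and $X_{kl}$ in factors $k,l$. An R-matrix is an invertible $R$ with $R_1R_2R_1=R_2R_1R_2$; it is skew invertible if there is $\Psi$ with $\mathrm{Tr}_{(2)}(R_{12}\Psi_{23})=\mathrm{Tr}_{(2)}(\Psi_{12}R_{23})=P_{13}$ ($\mathrm{Tr}_{(k)}$ = partial trace over factor $k$). Then $(D_R)_1:=\mathrm{Tr}_{(2)}\Psi_{12}$ and the R-trace over factor $k$ is $\mathrm{Tr}_{R(k)}(Y)=\mathrm{Tr}_{(k)}((D_R)_kY)$; $\mathrm{Tr}_{R(k,\dots,l)}$ is the composition over factors $k,\dots,l$. *)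

theory Defs
  imports Complex_Main
begin

text \<open>Concrete model: V = C^n with its standard basis.  An operator on the tensor
power V^{\<otimes>m} is given by its matrix entries, indexed by multi-indices
(lists of length m with entries < n): A x y is the (x,y) entry.  Only entries with
x, y in idx n m are meaningful; equality of operators is op_eq.\<close>

type_synonym op = "nat list \<Rightarrow> nat list \<Rightarrow> complex"

definition idx :: "nat \<Rightarrow> nat \<Rightarrow> nat list set" where
  "idx n m = {xs. length xs = m \<and> (\<forall>a\<in>set xs. a < n)}"

definition op_eq :: "nat \<Rightarrow> nat \<Rightarrow> op \<Rightarrow> op \<Rightarrow> bool" where
  "op_eq n m A B \<longleftrightarrow> (\<forall>x\<in>idx n m. \<forall>y\<in>idx n m. A x y = B x y)"

definition op_id :: op where
  "op_id x y = (if x = y then 1 else 0)"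

definition op_flip :: op where
  "op_flip x y = (if x = [y!1, y!0] then 1 else 0)"

definition op_mult :: "nat \<Rightarrow> nat \<Rightarrow> op \<Rightarrow> op \<Rightarrow> op" where
  "op_mult n m A B = (\<lambda>x y. \<Sum>z\<in>idx n m. A x z * B z y)"

primrec op_pow :: "nat \<Rightarrow> nat \<Rightarrow> op \<Rightarrow> nat \<Rightarrow> op" where
  "op_pow n m A 0 = op_id"
| "op_pow n m A (Suc k) = op_mult n m A (op_pow n m A k)"

primrec op_prod :: "nat \<Rightarrow> nat \<Rightarrow> op list \<Rightarrow> op" where
  "op_prod n m [] = op_id"
| "op_prod n m (A # As) = op_mult n m A (op_prod n m As)"

text \<open>X_{kl}: an operator X on V \<otimes> V acting in tensor factors k, l (1-based).\<close>
definition emb2 :: "nat \<Rightarrow> nat \<Rightarrow> op \<Rightarrow> op" where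
  "emb2 k l X = (\<lambda>x y. X [x!(k-1), x!(l-1)] [y!(k-1), y!(l-1)] *
      (if (\<forall>j<length x. j \<noteq> k-1 \<and> j \<noteq> l-1 \<longrightarrow> x!j = y!j) then 1 else 0))"

text \<open>D_k: an operator D on V acting in tensor factor k (1-based).\<close>
definition emb1 :: "nat \<Rightarrow> op \<Rightarrow> op" where
  "emb1 k D = (\<lambda>x y. D [x!(k-1)] [y!(k-1)] *
      (if (\<forall>j<length x. j \<noteq> k-1 \<longrightarrow> x!j = y!j) then 1 else 0))"

text \<open>Partial trace Tr_(k) over tensor factor k (1-based); maps operators on
V^{\<otimes>m} to operators on V^{\<otimes>(m-1)}.\<close>
definition ptr :: "nat \<Rightarrow> nat \<Rightarrow> op \<Rightarrow> op" where
  "ptr n k Y = (\<lambda>x y. \<Sum>a<n. Y (take (k-1) x @ a # drop (k-1) x)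
                                 (take (k-1) y @ a # drop (k-1) y))"

text \<open>R-trace Tr_{R(k)} Y = Tr_(k)((D_R)_k Y) for Y on V^{\<otimes>m}.\<close>
definition rtr :: "nat \<Rightarrow> nat \<Rightarrow> op \<Rightarrow> nat \<Rightarrow> op \<Rightarrow> op" where
  "rtr n m D k Y = ptr n k (op_mult n m (emb1 k D) Y)"

text \<open>R-trace over the last j factors of an operator on V^{\<otimes>m}:
rtr_last n m D j Y = Tr_{R(m-j+1)} ( ... Tr_{R(m)} Y ...).\<close>
primrec rtr_last :: "nat \<Rightarrow> nat \<Rightarrow> op \<Rightarrow> nat \<Rightarrow> op \<Rightarrow> op" where
  "rtr_last n m D 0 Y = Y"
| "rtr_last n m D (Suc j) Y = rtr_last n (m - 1) D j (rtr n m D m Y)"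

definition Rk :: "op \<Rightarrow> nat \<Rightarrow> op" where
  "Rk R k = emb2 k (Suc k) R"

fun Jop :: "nat \<Rightarrow> nat \<Rightarrow> op \<Rightarrow> nat \<Rightarrow> op" where
  "Jop n m R 0 = op_id"
| "Jop n m R (Suc 0) = op_id"
| "Jop n m R (Suc (Suc k)) =
     op_mult n m (op_mult n m (Rk R (Suc k)) (Jop n m R (Suc k))) (Rk R (Suc k))"

fun Ups :: "nat \<Rightarrow> nat \<Rightarrow> op \<Rightarrow> nat \<Rightarrow> op" where
  "Ups n m R 0 = op_id"
| "Ups n m R (Suc 0) = op_id"
| "Ups n m R (Suc (Suc k)) =
     op_mult n m (op_prod n m (map (Rk R) [1..<Suc (Suc k)])) (Ups n m R (Suc k))"

end

theory Submission
  imports Defs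
begin

text \<open>Every operator in the statement is the image of a positive braid word under
sigma_k \<mapsto> R_k, so only the braid relation of R matters.  Upsilon^(k) is the image of the
half twist Delta_k, and in the braid monoid Delta_k^2 = J_1 ... J_k = (sigma_1 ... sigma_(k-1))^k,
while Delta_(2i) = Delta_i X Delta_i with both half twists on the first i strands and X the
crossing of the two blocks of i strands.  The R-trace over the last factors is a bimodule map
for operators acting on the first factors, and skew invertibility gives Tr_R(2) R_1 = I, which
removes one letter of X per traced factor.  So X traces to (R_1 ... R_(i-1))^i = J_1 ... J_i,
and the whole trace to Upsilon^(i) J_1 ... J_i Upsilon^(i) = (Upsilon^(i))^4 = (J_1 ... J_i)^2.\<close>

lemma length_idx: "x \<in> idx n m \<Longrightarrow> length x = m" by (simp add: idx_def)

lemma finite_idx: "finite (idx n m)"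
proof -
  have "idx n m = {xs. set xs \<subseteq> {..<n} \<and> length xs = m}" by (auto simp: idx_def)
  thus ?thesis using finite_lists_length_eq[of "{..<n}" m] by simp
qed

lemma idx_Suc: "idx n (Suc m) = (\<lambda>(a,xs). a # xs) ` ({..<n} \<times> idx n m)"
proof (rule set_eqI, rule iffI)
  fix x assume "x \<in> idx n (Suc m)"
  then show "x \<in> (\<lambda>(a,xs). a # xs) ` ({..<n} \<times> idx n m)"
    by (cases x) (auto simp: idx_def image_iff)
qed (auto simp: idx_def)

lemma sum_idx_Suc: "(\<Sum>x\<in>idx n (Suc m). f x) = (\<Sum>a<n. \<Sum>xs\<in>idx n m. f (a # xs))"
proof -
  have inj: "inj_on (\<lambda>(a,xs). a # xs) ({..<n} \<times> idx n m)" by (auto simp: inj_on_def)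
  have "(\<Sum>x\<in>idx n (Suc m). f x) = (\<Sum>p\<in>{..<n} \<times> idx n m. f ((\<lambda>(a,xs). a # xs) p))"
    unfolding idx_Suc by (rule sum.reindex[OF inj, unfolded comp_def])
  also have "\<dots> = (\<Sum>a<n. \<Sum>xs\<in>idx n m. f (a # xs))"
    by (simp add: sum.cartesian_product split_def)
  finally show ?thesis .
qed

lemma idx_0: "idx n 0 = {[]}" by (auto simp: idx_def)

lemma sum_idx_1: "(\<Sum>x\<in>idx n (Suc 0). f x) = (\<Sum>a<n. f [a])"
  by (simp add: sum_idx_Suc idx_0)

lemma sum_idx_add: "(\<Sum>x\<in>idx n (p+q). f x) = (\<Sum>u\<in>idx n p. \<Sum>v\<in>idx n q. f (u @ v))"
proof (induction p arbitrary: f)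
  case 0 then show ?case by (simp add: idx_0)
next
  case (Suc p)
  have "(\<Sum>x\<in>idx n (Suc p + q). f x) = (\<Sum>a<n. \<Sum>xs\<in>idx n (p+q). f (a # xs))"
    by (simp add: sum_idx_Suc)
  also have "\<dots> = (\<Sum>a<n. \<Sum>u\<in>idx n p. \<Sum>v\<in>idx n q. f (a # u @ v))"
    using Suc.IH by simp
  also have "\<dots> = (\<Sum>u\<in>idx n (Suc p). \<Sum>v\<in>idx n q. f (u @ v))"
    by (simp add: sum_idx_Suc)
  finally show ?case .
qed

lemma sum_idx_snoc: "(\<Sum>z\<in>idx n (Suc p). f z) = (\<Sum>u\<in>idx n p. \<Sum>c<n. f (u @ [c]))"
  using sum_idx_add[where n=n and p=p and q="Suc 0" and f=f] by (simp add: sum_idx_1)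

lemma all_less_add_iff:
  fixes j q :: nat
  shows "(\<forall>i<j+q. P i) \<longleftrightarrow> (\<forall>i<j. P i) \<and> (\<forall>i<q. P (j+i))"
proof safe
  fix i assume "\<forall>i<j. P i" "\<forall>i<q. P (j+i)" "i < j+q"
  then show "P i" by (cases "i < j") (auto dest: spec[of _ "i - j"])
qed auto

text \<open>Operators are only compared on multi-indices in idx n m.  Zeroing all other entries
turns op_eq into equality, and op_comp is the product in this quotient.\<close>

definition op_restrict :: "nat \<Rightarrow> nat \<Rightarrow> op \<Rightarrow> op" where
  "op_restrict n m A = (\<lambda>x y. if x \<in> idx n m \<and> y \<in> idx n m then A x y else 0)"

definition op_comp :: "nat \<Rightarrow> nat \<Rightarrow> op \<Rightarrow> op \<Rightarrow> op" where
  "op_comp n m A B = op_restrict n m (op_mult n m A B)"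

definition op_tensor :: "nat \<Rightarrow> op \<Rightarrow> op \<Rightarrow> op" where
  "op_tensor p A B = (\<lambda>x y. A (take p x) (take p y) * B (drop p x) (drop p y))"

lemma op_eq_iff_restrict: "op_eq n m A B \<longleftrightarrow> op_restrict n m A = op_restrict n m B"
  unfolding op_eq_def op_restrict_def by (auto simp: fun_eq_iff)

lemma op_restrict_cong:
  "(\<And>x y. length x = m \<Longrightarrow> length y = m \<Longrightarrow> A x y = B x y) \<Longrightarrow>
   op_restrict n m A = op_restrict n m B"
  by (auto simp: op_restrict_def fun_eq_iff dest: length_idx)

lemma op_restrict_idem[simp]: "op_restrict n m (op_restrict n m A) = op_restrict n m A"
  by (simp add: op_restrict_def fun_eq_iff)

lemma op_restrict_comp[simp]: "op_restrict n m (op_comp n m A B) = op_comp n m A B"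
  by (simp add: op_comp_def)

lemma op_mult_restrict_left:
  "x \<in> idx n m \<Longrightarrow> op_mult n m (op_restrict n m A) B x y = op_mult n m A B x y"
  unfolding op_mult_def op_restrict_def by (rule sum.cong) auto

lemma op_mult_restrict_right:
  "y \<in> idx n m \<Longrightarrow> op_mult n m A (op_restrict n m B) x y = op_mult n m A B x y"
  unfolding op_mult_def op_restrict_def by (rule sum.cong) auto

lemma op_comp_restrict_left[simp]: "op_comp n m (op_restrict n m A) B = op_comp n m A B"
  unfolding op_comp_def op_restrict_def[of n m "op_mult n m (op_restrict n m A) B"] op_restrict_def[of n m "op_mult n m A B"]
  by (auto simp: fun_eq_iff op_mult_restrict_left)

lemma op_comp_restrict_right[simp]: "op_comp n m A (op_restrict n m B) = op_comp n m A B"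
  unfolding op_comp_def op_restrict_def[of n m "op_mult n m A (op_restrict n m B)"] op_restrict_def[of n m "op_mult n m A B"]
  by (auto simp: fun_eq_iff op_mult_restrict_right)

lemma op_mult_assoc: "op_mult n m (op_mult n m A B) C = op_mult n m A (op_mult n m B C)"
  unfolding op_mult_def
proof (rule ext, rule ext)
  fix x y
  have "(\<Sum>z\<in>idx n m. (\<Sum>w\<in>idx n m. A x w * B w z) * C z y) = (\<Sum>z\<in>idx n m. \<Sum>w\<in>idx n m. A x w * B w z * C z y)"
    by (simp add: sum_distrib_right)
  also have "\<dots> = (\<Sum>w\<in>idx n m. \<Sum>z\<in>idx n m. A x w * (B w z * C z y))"
    by (subst sum.swap) (simp add: mult.assoc)
  also have "\<dots> = (\<Sum>w\<in>idx n m. A x w * (\<Sum>z\<in>idx n m. B w z * C z y))"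
    by (simp add: sum_distrib_left)
  finally show "(\<Sum>z\<in>idx n m. (\<Sum>w\<in>idx n m. A x w * B w z) * C z y) = (\<Sum>w\<in>idx n m. A x w * (\<Sum>z\<in>idx n m. B w z * C z y))" .
qed

lemma op_comp_assoc: "op_comp n m (op_comp n m A B) C = op_comp n m A (op_comp n m B C)"
proof -
  have "op_comp n m (op_comp n m A B) C = op_comp n m (op_mult n m A B) C"
    unfolding op_comp_def[of n m A B] by simp
  also have "\<dots> = op_comp n m A (op_mult n m B C)" by (simp add: op_comp_def op_mult_assoc)
  also have "\<dots> = op_comp n m A (op_comp n m B C)" unfolding op_comp_def[of n m B C] by simp
  finally show ?thesis .
qed

lemma op_mult_id_left: "x \<in> idx n m \<Longrightarrow> op_mult n m op_id B x y = B x y"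
proof -
  assume x: "x \<in> idx n m"
  have "\<And>z. op_id x z * B z y = (if x = z then B x y else 0)" by (simp add: op_id_def)
  then show ?thesis unfolding op_mult_def using x by (simp add: finite_idx)
qed

lemma op_mult_id_right: "y \<in> idx n m \<Longrightarrow> op_mult n m A op_id x y = A x y"
proof -
  assume y: "y \<in> idx n m"
  have "\<And>z. A x z * op_id z y = (if y = z then A x y else 0)" by (auto simp: op_id_def)
  then show ?thesis unfolding op_mult_def using y by (simp add: finite_idx)
qed

lemma op_comp_id_left[simp]: "op_comp n m op_id B = op_restrict n m B"
  unfolding op_comp_def op_restrict_def by (auto simp: fun_eq_iff op_mult_id_left)

lemma op_comp_id_right[simp]: "op_comp n m A op_id = op_restrict n m A"
  unfolding op_comp_def op_restrict_def by (auto simp: fun_eq_iff op_mult_id_right)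

lemma op_comp_cong:
  "op_restrict n m A = op_restrict n m A' \<Longrightarrow> op_restrict n m B = op_restrict n m B' \<Longrightarrow> op_comp n m A B = op_comp n m A' B'"
  by (metis op_comp_restrict_left op_comp_restrict_right)

lemma op_mult_tensor:
  "op_mult n (p+q) (op_tensor p A B) (op_tensor p C D) = op_tensor p (op_mult n p A C) (op_mult n q B D)"
proof (rule ext, rule ext)
  fix x y
  have "op_mult n (p+q) (op_tensor p A B) (op_tensor p C D) x y =
        (\<Sum>u\<in>idx n p. \<Sum>v\<in>idx n q. op_tensor p A B x (u@v) * op_tensor p C D (u@v) y)"
    unfolding op_mult_def by (rule sum_idx_add)
  also have "\<dots> = (\<Sum>u\<in>idx n p. \<Sum>v\<in>idx n q. (A (take p x) u * C u (take p y)) * (B (drop p x) v * D v (drop p y)))"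
  proof (rule sum.cong[OF refl], rule sum.cong[OF refl])
    fix u v assume u: "u \<in> idx n p" and v: "v \<in> idx n q"
    then have lu: "length u = p" by (simp add: length_idx)
    show "op_tensor p A B x (u @ v) * op_tensor p C D (u @ v) y = (A (take p x) u * C u (take p y)) * (B (drop p x) v * D v (drop p y))"
      unfolding op_tensor_def using lu by (simp add: ac_simps)
  qed
  also have "\<dots> = (\<Sum>u\<in>idx n p. A (take p x) u * C u (take p y)) * (\<Sum>v\<in>idx n q. B (drop p x) v * D v (drop p y))"
    by (rule sum_product[symmetric])
  also have "\<dots> = op_tensor p (op_mult n p A C) (op_mult n q B D) x y"
    by (simp only: op_tensor_def op_mult_def)
  finally show "op_mult n (p+q) (op_tensor p A B) (op_tensor p C D) x y = op_tensor p (op_mult n p A C) (op_mult n q B D) x y" .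
qed

lemma op_tensor_id: "op_tensor p op_id op_id = op_id"
proof (rule ext, rule ext)
  fix x y :: "nat list"
  show "op_tensor p op_id op_id x y = op_id x y"
  proof (cases "x = y")
    case True then show ?thesis by (simp add: op_tensor_def op_id_def)
  next
    case False
    then have "take p x \<noteq> take p y \<or> drop p x \<noteq> drop p y" by (metis append_take_drop_id)
    then show ?thesis using False by (auto simp add: op_tensor_def op_id_def)
  qed
qed

lemma idx_take: "x \<in> idx n (p+q) \<Longrightarrow> take p x \<in> idx n p"
  by (auto simp: idx_def dest: in_set_takeD)
lemma idx_drop: "x \<in> idx n (p+q) \<Longrightarrow> drop p x \<in> idx n q"
  by (auto simp: idx_def dest: in_set_dropD)

lemma op_restrict_tensor:
  "op_restrict n (p+q) (op_tensor p (op_restrict n p A) (op_restrict n q B)) = op_restrict n (p+q) (op_tensor p A B)"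
proof (rule ext, rule ext)
  fix x y
  show "op_restrict n (p+q) (op_tensor p (op_restrict n p A) (op_restrict n q B)) x y = op_restrict n (p+q) (op_tensor p A B) x y"
  proof (cases "x \<in> idx n (p+q) \<and> y \<in> idx n (p+q)")
    case True
    then have "take p x \<in> idx n p" "take p y \<in> idx n p" "drop p x \<in> idx n q" "drop p y \<in> idx n q"
      by (auto intro: idx_take idx_drop)
    then show ?thesis using True by (simp add: op_restrict_def op_tensor_def)
  next
    case False then show ?thesis unfolding op_restrict_def[of n "p+q"] by (simp only: if_False)
  qed
qed

lemma op_restrict_tensor_left:
  "op_restrict n (p+q) (op_tensor p (op_restrict n p A) B) = op_restrict n (p+q) (op_tensor p A B)"
  by (metis op_restrict_idem op_restrict_tensor)

lemma op_restrict_tensor_right: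
  "op_restrict n (p+q) (op_tensor p A (op_restrict n q B)) = op_restrict n (p+q) (op_tensor p A B)"
  by (metis op_restrict_idem op_restrict_tensor)

lemma op_comp_tensor:
  "op_comp n (p+q) (op_tensor p A B) (op_tensor p C D) = op_restrict n (p+q) (op_tensor p (op_comp n p A C) (op_comp n q B D))"
  unfolding op_comp_def op_mult_tensor by (rule op_restrict_tensor[symmetric])

text \<open>A word [k1, ..., kr] stands for R_k1 ... R_kr.  ups_word k is the half twist
(the word of Upsilon^(k)), J_word k the word of J_k, and cross_word a c crosses the first c
strands over the next a strands.\<close>

definition asc :: "nat \<Rightarrow> nat \<Rightarrow> nat list" where "asc c k = [Suc c..<Suc (c+k)]"
definition desc :: "nat \<Rightarrow> nat \<Rightarrow> nat list" where "desc c k = rev (asc c k)"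
definition word_pow :: "nat list \<Rightarrow> nat \<Rightarrow> nat list" where "word_pow w j = concat (replicate j w)"

primrec ups_word :: "nat \<Rightarrow> nat list" where
  "ups_word 0 = []" | "ups_word (Suc k) = asc 0 k @ ups_word k"
primrec cross_word :: "nat \<Rightarrow> nat \<Rightarrow> nat list" where
  "cross_word a 0 = []" | "cross_word a (Suc c) = asc c a @ cross_word a c"
fun J_word :: "nat \<Rightarrow> nat list" where
  "J_word 0 = []" | "J_word (Suc 0) = []" | "J_word (Suc (Suc k)) = Suc k # J_word (Suc k) @ [Suc k]"
definition Jprod_word :: "nat \<Rightarrow> nat list" where "Jprod_word k = concat (map J_word [1..<Suc k])"

inductive braid_equiv :: "nat list \<Rightarrow> nat list \<Rightarrow> bool" where
  braid_refl: "braid_equiv w w"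
| braid_sym: "braid_equiv u v \<Longrightarrow> braid_equiv v u"
| braid_trans: "braid_equiv u v \<Longrightarrow> braid_equiv v w \<Longrightarrow> braid_equiv u w"
| braid_ctxt: "braid_equiv u v \<Longrightarrow> braid_equiv (p @ u @ s) (p @ v @ s)"
| braid_rel: "braid_equiv [k, Suc k, k] [Suc k, k, Suc k]"
| braid_far: "Suc k < l \<Longrightarrow> braid_equiv [k, l] [l, k]"

declare braid_equiv.braid_trans[trans]

lemma braid_equiv_set: "braid_equiv u v \<Longrightarrow> set u = set v"
  by (induction rule: braid_equiv.induct) auto

lemma braid_equiv_append:
  "braid_equiv u u' \<Longrightarrow> braid_equiv v v' \<Longrightarrow> braid_equiv (u @ v) (u' @ v')"
proof -
  assume a: "braid_equiv u u'" and b: "braid_equiv v v'"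
  have "braid_equiv ([] @ u @ v) ([] @ u' @ v)" by (rule braid_equiv.braid_ctxt[OF a])
  moreover have "braid_equiv (u' @ v @ []) (u' @ v' @ [])" by (rule braid_equiv.braid_ctxt[OF b])
  ultimately show ?thesis by (auto intro: braid_equiv.braid_trans)
qed

lemma braid_equiv_append_left:
  "braid_equiv v v' \<Longrightarrow> braid_equiv (u @ v) (u @ v')"
  by (rule braid_equiv_append[OF braid_equiv.braid_refl])
lemma braid_equiv_append_right:
  "braid_equiv u u' \<Longrightarrow> braid_equiv (u @ v) (u' @ v)"
  by (rule braid_equiv_append[OF _ braid_equiv.braid_refl])

lemma braid_equiv_rev: "braid_equiv u v \<Longrightarrow> braid_equiv (rev u) (rev v)"
proof (induction rule: braid_equiv.induct)
  case (braid_ctxt u v p s) then show ?case using braid_equiv.braid_ctxt[of "rev u" "rev v" "rev s" "rev p"] by simp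
next
  case (braid_far k l) then show ?case by (simp add: braid_equiv.braid_sym braid_equiv.braid_far)
qed (auto intro: braid_equiv.intros)

definition distant :: "nat \<Rightarrow> nat \<Rightarrow> bool" where "distant x y \<longleftrightarrow> Suc x < y \<or> Suc y < x"

lemma braid_equiv_distant: "distant x y \<Longrightarrow> braid_equiv [x, y] [y, x]"
  unfolding distant_def using braid_equiv.braid_far braid_equiv.braid_sym by blast

lemma braid_equiv_commute_letter:
  "\<forall>y\<in>set w. distant x y \<Longrightarrow> braid_equiv ([x] @ w) (w @ [x])"
proof (induction w)
  case Nil then show ?case by (simp add: braid_equiv.braid_refl)
next
  case (Cons y w)
  have "braid_equiv ([x, y] @ w) ([y, x] @ w)"
    by (rule braid_equiv_append_right, rule braid_equiv_distant) (use Cons.prems in simp)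
  moreover have "braid_equiv ([y] @ ([x] @ w)) ([y] @ (w @ [x]))"
    by (rule braid_equiv_append_left) (use Cons in simp)
  ultimately show ?case by (auto intro: braid_equiv.braid_trans)
qed

lemma braid_equiv_commute:
  "\<forall>x\<in>set u. \<forall>y\<in>set w. distant x y \<Longrightarrow> braid_equiv (u @ w) (w @ u)"
proof (induction u)
  case Nil then show ?case by (simp add: braid_equiv.braid_refl)
next
  case (Cons x u)
  have "braid_equiv ([x] @ (u @ w)) ([x] @ (w @ u))" by (rule braid_equiv_append_left) (use Cons in simp)
  moreover have "braid_equiv (([x] @ w) @ u) ((w @ [x]) @ u)"
    by (rule braid_equiv_append_right, rule braid_equiv_commute_letter) (use Cons.prems in simp)
  ultimately show ?case by (auto intro: braid_equiv.braid_trans)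
qed

lemma set_asc: "set (asc c k) = {Suc c..<Suc (c+k)}" unfolding asc_def by (rule set_upt)
lemma set_desc: "set (desc c k) = {Suc c..<Suc (c+k)}" unfolding desc_def set_rev by (rule set_asc)

lemma asc_split: "a \<le> k \<Longrightarrow> asc c k = asc c a @ asc (c+a) (k-a)"
proof -
  assume "a \<le> k"
  then have e: "Suc (c+k) = Suc (c+a) + (k-a)" "Suc (c + a + (k - a)) = Suc (c+a) + (k-a)" by simp_all
  show ?thesis unfolding asc_def e by (rule upt_add_eq_append) simp
qed
lemma asc_Suc: "asc c (Suc k) = asc c k @ [Suc (c+k)]" by (simp add: asc_def)
lemma asc_Suc_Cons: "asc c (Suc k) = Suc c # asc (Suc c) k" by (simp add: asc_def upt_conv_Cons)
lemma desc_Suc: "desc c (Suc k) = Suc (c+k) # desc c k" by (simp add: desc_def asc_Suc)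
lemma asc_0[simp]: "asc c 0 = []" by (simp add: asc_def)
lemma desc_0[simp]: "desc c 0 = []" by (simp add: desc_def)
lemma map_Suc_asc: "map Suc (asc c k) = asc (Suc c) k" by (simp add: asc_def map_Suc_upt)
lemma map_Suc_desc:
  "map Suc (desc c k) = desc (Suc c) k" by (simp add: desc_def rev_map[symmetric] map_Suc_asc)

lemma asc_letter_shift:
  assumes "1 \<le> j" "j < k"
  shows "braid_equiv (asc c k @ [c+j]) ([Suc (c+j)] @ asc c k)"
proof -
  define P where "P = asc c (j-1)"
  define S where "S = asc (Suc (c+j)) (k-j-1)"
  have dec: "asc c k = P @ [c+j, Suc (c+j)] @ S"
  proof -
    have "asc c k = asc c (j-1) @ asc (c+(j-1)) (k-(j-1))" using assms by (intro asc_split) simp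
    moreover have "k - (j-1) = Suc (Suc (k-j-1))" using assms by simp
    moreover have "c + (j-1) = c + j - 1" using assms by simp
    ultimately show ?thesis unfolding P_def S_def using assms
      by (simp add: asc_Suc_Cons)
  qed
  have fS: "\<forall>y\<in>set S. distant (c+j) y" by (auto simp: S_def set_asc distant_def)
  have fP: "\<forall>y\<in>set P. distant (Suc (c+j)) y" using assms by (auto simp: P_def set_asc distant_def)
  have "braid_equiv (P @ [c+j, Suc (c+j)] @ (S @ [c+j])) (P @ [c+j, Suc (c+j)] @ ([c+j] @ S))"
    by (rule braid_equiv_append_left, rule braid_equiv_append_left, rule braid_equiv.braid_sym, rule braid_equiv_commute_letter[OF fS])
  moreover have "braid_equiv (P @ [c+j, Suc (c+j), c+j] @ S) (P @ [Suc (c+j), c+j, Suc (c+j)] @ S)"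
    by (rule braid_equiv.braid_ctxt, rule braid_equiv.braid_rel)
  moreover have "braid_equiv ((P @ [Suc (c+j)]) @ [c+j, Suc (c+j)] @ S) (([Suc (c+j)] @ P) @ [c+j, Suc (c+j)] @ S)"
    by (rule braid_equiv_append_right, rule braid_equiv.braid_sym, rule braid_equiv_commute_letter[OF fP])
  ultimately show ?thesis unfolding dec by (auto intro: braid_equiv.braid_trans)
qed

lemma asc_word_shift:
  "\<forall>x\<in>set w. c < x \<and> x < c + a \<Longrightarrow> braid_equiv (asc c a @ w) (map Suc w @ asc c a)"
proof (induction w rule: rev_induct)
  case Nil then show ?case by (simp add: braid_equiv.braid_refl)
next
  case (snoc x w)
  have "braid_equiv ((asc c a @ w) @ [x]) ((map Suc w @ asc c a) @ [x])"
    by (rule braid_equiv_append_right) (use snoc in simp)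
  moreover have "braid_equiv (map Suc w @ (asc c a @ [c + (x - c)])) (map Suc w @ ([Suc (c + (x - c))] @ asc c a))"
    by (rule braid_equiv_append_left, rule asc_letter_shift) (use snoc.prems in auto)
  ultimately show ?case using snoc.prems by (auto intro: braid_equiv.braid_trans)
qed

lemma letter_desc_shift:
  "1 \<le> x \<Longrightarrow> x < m \<Longrightarrow> braid_equiv ([x] @ desc 0 m) (desc 0 m @ [Suc x])"
  using braid_equiv_rev[OF asc_letter_shift[of x m 0]] by (simp add: desc_def)

lemma set_ups_word: "set (ups_word m) \<subseteq> {1..<m}"
  by (induction m) (auto simp: set_asc)

lemma ups_word_Suc_equiv: "braid_equiv (ups_word (Suc m)) (ups_word m @ desc 0 m)"
proof (induction m)
  case 0 then show ?case by (simp add: braid_equiv.braid_refl)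
next
  case (Suc m)
  have "ups_word (Suc (Suc m)) = asc 0 (Suc m) @ ups_word (Suc m)" by simp
  also have "braid_equiv \<dots> (asc 0 (Suc m) @ (ups_word m @ desc 0 m))"
    by (rule braid_equiv_append_left, rule Suc.IH)
  also have "\<dots> = asc 0 m @ ([Suc m] @ ups_word m) @ desc 0 m" by (simp add: asc_Suc)
  also have "braid_equiv \<dots> (asc 0 m @ (ups_word m @ [Suc m]) @ desc 0 m)"
    by (rule braid_equiv.braid_ctxt, rule braid_equiv_commute_letter) (use set_ups_word[of m] in \<open>auto simp: distant_def\<close>)
  also have "\<dots> = ups_word (Suc m) @ desc 0 (Suc m)" by (simp add: desc_Suc)
  finally show ?case .
qed

lemma letter_ups_word_commute:
  "1 \<le> j \<Longrightarrow> j < m \<Longrightarrow> braid_equiv ([j] @ ups_word m) (ups_word m @ [m - j])"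
proof (induction m arbitrary: j)
  case 0 then show ?case by simp
next
  case (Suc m)
  show ?case
  proof (cases "j \<ge> 2")
    case True
    have "[j] @ ups_word (Suc m) = ([j] @ asc 0 m) @ ups_word m" by simp
    also have "braid_equiv \<dots> ((asc 0 m @ [j-1]) @ ups_word m)"
      by (rule braid_equiv_append_right, rule braid_equiv.braid_sym) (use asc_letter_shift[of "j-1" m 0] True Suc.prems in simp)
    also have "\<dots> = asc 0 m @ ([j-1] @ ups_word m)" by simp
    also have "braid_equiv \<dots> (asc 0 m @ (ups_word m @ [m - (j-1)]))"
      by (rule braid_equiv_append_left, rule Suc.IH) (use Suc True in auto)
    also have "\<dots> = ups_word (Suc m) @ [Suc m - j]" using True Suc.prems by simp
    finally show ?thesis .
  next
    case False
    then have j1: "j = 1" using Suc.prems by simp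
    show ?thesis
    proof (cases "m = 1")
      case True then show ?thesis using j1 by (simp add: braid_equiv.braid_refl asc_def)
    next
      case False
      then have m2: "m \<ge> 2" using Suc.prems j1 by simp
      have "braid_equiv ([1] @ ups_word (Suc m)) ([1] @ (ups_word m @ desc 0 m))"
        by (rule braid_equiv_append_left, rule ups_word_Suc_equiv)
      also have "\<dots> = ([1] @ ups_word m) @ desc 0 m" by simp
      also have "braid_equiv \<dots> ((ups_word m @ [m - 1]) @ desc 0 m)"
        by (rule braid_equiv_append_right, rule Suc.IH) (use m2 in auto)
      also have "\<dots> = ups_word m @ ([m - 1] @ desc 0 m)" by simp
      also have "braid_equiv \<dots> (ups_word m @ (desc 0 m @ [Suc (m-1)]))"
        by (rule braid_equiv_append_left, rule letter_desc_shift) (use m2 in auto)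
      also have "\<dots> = (ups_word m @ desc 0 m) @ [m]" using m2 by simp
      also have "braid_equiv \<dots> (ups_word (Suc m) @ [m])"
        by (rule braid_equiv_append_right, rule braid_equiv.braid_sym, rule ups_word_Suc_equiv)
      finally show ?thesis using j1 by simp
    qed
  qed
qed

lemma word_ups_word_commute:
  "\<forall>x\<in>set w. 1 \<le> x \<and> x < m \<Longrightarrow> braid_equiv (w @ ups_word m) (ups_word m @ map (\<lambda>x. m - x) w)"
proof (induction w rule: rev_induct)
  case Nil then show ?case by (simp add: braid_equiv.braid_refl)
next
  case (snoc x w)
  have "(w @ [x]) @ ups_word m = w @ ([x] @ ups_word m)" by simp
  also have "braid_equiv \<dots> (w @ (ups_word m @ [m - x]))"
    by (rule braid_equiv_append_left, rule letter_ups_word_commute) (use snoc.prems in auto)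
  also have "\<dots> = (w @ ups_word m) @ [m - x]" by simp
  also have "braid_equiv \<dots> ((ups_word m @ map (\<lambda>x. m - x) w) @ [m - x])"
    by (rule braid_equiv_append_right, rule snoc.IH) (use snoc.prems in auto)
  also have "\<dots> = ups_word m @ map (\<lambda>x. m - x) (w @ [x])" by simp
  finally show ?case .
qed

lemma map_reflect_desc: "map (\<lambda>x. Suc k - x) (desc 0 k) = asc 0 k"
  unfolding desc_def asc_def by (rule nth_equalityI) (auto simp del: upt_Suc simp add: rev_nth)

lemma J_word_Suc: "J_word (Suc k) = desc 0 k @ asc 0 k"
  by (induction k) (auto simp: desc_Suc asc_Suc)

lemma Jprod_word_Suc: "Jprod_word (Suc k) = Jprod_word k @ J_word (Suc k)"
  by (simp add: Jprod_word_def)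

lemma Jprod_word_0: "Jprod_word 0 = []" by (simp add: Jprod_word_def)

lemma ups_word_square: "braid_equiv (ups_word k @ ups_word k) (Jprod_word k)"
proof (induction k)
  case 0 then show ?case by (simp add: Jprod_word_0 braid_equiv.braid_refl)
next
  case (Suc k)
  have "braid_equiv (ups_word (Suc k) @ ups_word (Suc k)) ((ups_word k @ desc 0 k) @ ups_word (Suc k))"
    by (rule braid_equiv_append_right, rule ups_word_Suc_equiv)
  also have "\<dots> = ups_word k @ (desc 0 k @ ups_word (Suc k))" by simp
  also have "braid_equiv \<dots> (ups_word k @ (ups_word (Suc k) @ asc 0 k))"
    by (rule braid_equiv_append_left) (use word_ups_word_commute[of "desc 0 k" "Suc k"] in \<open>auto simp: set_desc map_reflect_desc\<close>)
  also have "braid_equiv \<dots> (ups_word k @ (ups_word k @ desc 0 k) @ asc 0 k)"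
    by (rule braid_equiv_append_left, rule braid_equiv_append_right, rule ups_word_Suc_equiv)
  also have "\<dots> = (ups_word k @ ups_word k) @ J_word (Suc k)" by (simp add: J_word_Suc)
  also have "braid_equiv \<dots> (Jprod_word k @ J_word (Suc k))"
    by (rule braid_equiv_append_right, rule Suc.IH)
  also have "\<dots> = Jprod_word (Suc k)" by (simp add: Jprod_word_Suc)
  finally show ?case .
qed

lemma word_pow_Suc: "word_pow w (Suc j) = word_pow w j @ w"
  by (simp add: word_pow_def replicate_append_same[symmetric])
lemma word_pow_0[simp]: "word_pow w 0 = []" by (simp add: word_pow_def)
lemma set_word_pow: "set (word_pow w j) \<subseteq> set w" by (auto simp: word_pow_def)
lemma map_word_pow: "map f (word_pow w j) = word_pow (map f w) j" by (simp add: word_pow_def map_concat)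

lemma desc_asc_exchange:
  assumes "1 \<le> j" "Suc j \<le> k"
  shows "braid_equiv (desc (k-j) j @ asc 0 k) (asc 0 (k-1) @ desc (k-j-1) (Suc j))"
proof -
  obtain j' where j': "j = Suc j'" using assms by (cases j) auto
  obtain k' where k': "k = Suc (Suc k')" using assms by (cases k; cases "k-1") auto
  have q1: "desc (k-j) j = [k] @ desc (k-j) j'" using assms j' k' by (simp add: desc_Suc)
  have p1: "asc 0 k = asc 0 (k-1) @ [k]" using k' by (simp add: asc_Suc)
  have e: "Suc (k-j-1) = k-j" using assms by simp
  have q2: "desc (k-j) j' = map Suc (desc (k-j-1) j')" by (simp only: map_Suc_desc e)
  have step1: "braid_equiv (asc 0 (k-1) @ desc (k-j-1) j') (desc (k-j) j' @ asc 0 (k-1))"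
    unfolding q2 by (rule asc_word_shift) (use assms j' in \<open>auto simp: set_desc\<close>)
  have step2: "braid_equiv (desc (k-j-1) j' @ [k]) ([k] @ desc (k-j-1) j')"
    by (rule braid_equiv.braid_sym, rule braid_equiv_commute_letter) (use assms j' in \<open>auto simp: set_desc distant_def\<close>)
  have p2: "asc 0 (k-1) = asc 0 (k-2) @ [k-1]" using k' by (simp add: asc_Suc)
  have step3: "braid_equiv ([k] @ asc 0 (k-2)) (asc 0 (k-2) @ [k])"
    by (rule braid_equiv_commute_letter) (use k' in \<open>auto simp: set_asc distant_def\<close>)
  have step4: "braid_equiv [k, k-1, k] [k-1, k, k-1]"
    using braid_equiv.braid_rel[of "k-1"] k' by (simp add: braid_equiv.braid_sym)
  have q3: "desc (k-j-1) (Suc j) = [k, k-1] @ desc (k-j-1) j'" using assms j' k' by (simp add: desc_Suc)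
  have "desc (k-j) j @ asc 0 k = [k] @ (desc (k-j) j' @ asc 0 (k-1)) @ [k]" by (simp add: q1 p1)
  also have "braid_equiv \<dots> ([k] @ (asc 0 (k-1) @ desc (k-j-1) j') @ [k])"
    by (rule braid_equiv.braid_ctxt, rule braid_equiv.braid_sym, rule step1)
  also have "[k] @ (asc 0 (k-1) @ desc (k-j-1) j') @ [k] = ([k] @ asc 0 (k-1)) @ (desc (k-j-1) j' @ [k])"
    by simp
  also have "braid_equiv \<dots> (([k] @ asc 0 (k-1)) @ ([k] @ desc (k-j-1) j'))"
    by (rule braid_equiv_append_left, rule step2)
  also have "\<dots> = (([k] @ asc 0 (k-2)) @ [k-1, k]) @ desc (k-j-1) j'" unfolding p2 by simp
  also have "braid_equiv \<dots> (((asc 0 (k-2) @ [k]) @ [k-1, k]) @ desc (k-j-1) j')"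
    by (rule braid_equiv_append_right, rule braid_equiv_append_right, rule step3)
  also have "\<dots> = asc 0 (k-2) @ [k, k-1, k] @ desc (k-j-1) j'" by simp
  also have "braid_equiv \<dots> (asc 0 (k-2) @ [k-1, k, k-1] @ desc (k-j-1) j')"
    by (rule braid_equiv.braid_ctxt, rule step4)
  also have "\<dots> = asc 0 (k-1) @ desc (k-j-1) (Suc j)" unfolding q3 p2 by simp
  finally show ?thesis .
qed

lemma word_pow_asc_equiv:
  "1 \<le> j \<Longrightarrow> j \<le> k \<Longrightarrow> braid_equiv (word_pow (asc 0 k) j) (word_pow (asc 0 (k-1)) j @ desc (k-j) j)"
proof (induction j rule: nat_induct_at_least)
  case base
  then show ?case by (cases k) (auto simp: word_pow_def asc_Suc desc_Suc braid_equiv.braid_refl)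
next
  case (Suc j)
  have "word_pow (asc 0 k) (Suc j) = word_pow (asc 0 k) j @ asc 0 k" by (simp add: word_pow_Suc)
  also have "braid_equiv \<dots> ((word_pow (asc 0 (k-1)) j @ desc (k-j) j) @ asc 0 k)"
    by (rule braid_equiv_append_right, rule Suc.IH) (use Suc in auto)
  also have "\<dots> = word_pow (asc 0 (k-1)) j @ (desc (k-j) j @ asc 0 k)" by simp
  also have "braid_equiv \<dots> (word_pow (asc 0 (k-1)) j @ (asc 0 (k-1) @ desc (k-j-1) (Suc j)))"
    by (rule braid_equiv_append_left, rule desc_asc_exchange) (use Suc in auto)
  also have "\<dots> = word_pow (asc 0 (k-1)) (Suc j) @ desc (k - Suc j) (Suc j)" by (simp add: word_pow_Suc)
  finally show ?case .
qed

lemma word_pow_asc_Jprod_word: "braid_equiv (word_pow (asc 0 (i-1)) i) (Jprod_word i)"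
proof (induction i)
  case 0 then show ?case by (simp add: Jprod_word_0 braid_equiv.braid_refl)
next
  case (Suc k)
  show ?case
  proof (cases "k = 0")
    case True then show ?thesis by (simp add: Jprod_word_def word_pow_def braid_equiv.braid_refl)
  next
    case False
    have "word_pow (asc 0 (Suc k - 1)) (Suc k) = word_pow (asc 0 k) k @ asc 0 k" by (simp add: word_pow_Suc)
    also have "braid_equiv \<dots> ((word_pow (asc 0 (k-1)) k @ desc 0 k) @ asc 0 k)"
      by (rule braid_equiv_append_right) (use word_pow_asc_equiv[of k k] False in auto)
    also have "\<dots> = word_pow (asc 0 (k-1)) k @ J_word (Suc k)" by (simp add: J_word_Suc)
    also have "braid_equiv \<dots> (Jprod_word k @ J_word (Suc k))"
      by (rule braid_equiv_append_right) (use Suc.IH in simp)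
    also have "\<dots> = Jprod_word (Suc k)" by (simp add: Jprod_word_Suc)
    finally show ?thesis .
  qed
qed

lemma word_pow_asc_equiv_ups_square: "braid_equiv (word_pow (asc 0 (k-1)) k) (ups_word k @ ups_word k)"
  using word_pow_asc_Jprod_word ups_word_square
  by (blast intro: braid_equiv.braid_trans braid_equiv.braid_sym)

lemma set_cross_word: "set (cross_word a c) \<subseteq> {1..<a+c}"
  by (induction c) (auto simp: set_asc)

lemma ups_word_add_equiv: "braid_equiv (ups_word (b + a)) (ups_word b @ cross_word a b @ ups_word a)"
proof (induction b)
  case 0 then show ?case by (simp add: braid_equiv.braid_refl)
next
  case (Suc b)
  have "ups_word (Suc b + a) = (asc 0 b @ asc b a) @ ups_word (b + a)" using asc_split[of b "b+a" 0] by simp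
  also have "braid_equiv \<dots> ((asc 0 b @ asc b a) @ (ups_word b @ cross_word a b @ ups_word a))"
    by (rule braid_equiv_append_left, rule Suc.IH)
  also have "\<dots> = asc 0 b @ (asc b a @ ups_word b) @ (cross_word a b @ ups_word a)" by simp
  also have "braid_equiv \<dots> (asc 0 b @ (ups_word b @ asc b a) @ (cross_word a b @ ups_word a))"
    by (rule braid_equiv.braid_ctxt, rule braid_equiv_commute) (use set_ups_word[of b] in \<open>auto simp: set_asc distant_def\<close>)
  also have "\<dots> = ups_word (Suc b) @ cross_word a (Suc b) @ ups_word a" by simp
  finally show ?case .
qed

lemma word_pow_asc_commute:
  "braid_equiv (word_pow (asc (Suc c) (a-1)) j @ asc c a) (asc c a @ word_pow (asc c (a-1)) j)"
proof -
  have "braid_equiv (asc c a @ word_pow (asc c (a-1)) j) (map Suc (word_pow (asc c (a-1)) j) @ asc c a)"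
    by (rule asc_word_shift) (use set_word_pow[of "asc c (a-1)" j] in \<open>cases a; auto simp: set_asc\<close>)
  then show ?thesis by (simp add: map_word_pow map_Suc_asc braid_equiv.braid_sym)
qed

lemma cross_word_Suc_equiv:
  assumes "1 \<le> a"
  shows "braid_equiv (word_pow (asc (Suc c) (a-1)) j @ cross_word a (Suc c))
                     (asc c (a-1) @ [a+c] @ word_pow (asc c (a-1)) j @ cross_word a c)"
proof -
  have "word_pow (asc (Suc c) (a-1)) j @ cross_word a (Suc c) = (word_pow (asc (Suc c) (a-1)) j @ asc c a) @ cross_word a c"
    by simp
  also have "braid_equiv \<dots> ((asc c a @ word_pow (asc c (a-1)) j) @ cross_word a c)"
    by (rule braid_equiv_append_right, rule word_pow_asc_commute)
  also have "asc c a = asc c (a-1) @ [a + c]" using assms asc_Suc[of c "a-1"] by simp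
  finally show ?thesis by simp
qed

definition word_op :: "nat \<Rightarrow> nat \<Rightarrow> op \<Rightarrow> nat list \<Rightarrow> op" where
  "word_op n m R w = op_restrict n m (op_prod n m (map (Rk R) w))"

lemma word_op_Nil: "word_op n m R [] = op_restrict n m op_id" by (simp add: word_op_def)

lemma word_op_Cons: "word_op n m R (k # w) = op_comp n m (Rk R k) (word_op n m R w)"
  by (simp add: word_op_def op_comp_def[symmetric])

lemma word_op_append: "word_op n m R (u @ v) = op_comp n m (word_op n m R u) (word_op n m R v)"
proof (induction u)
  case Nil
  have "word_op n m R v = op_restrict n m (word_op n m R v)" by (simp add: word_op_def)
  then show ?case by (simp add: word_op_Nil)
next
  case (Cons k u)
  then show ?case by (simp add: word_op_Cons op_comp_assoc)
qed

lemma word_op_single: "word_op n m R [k] = op_restrict n m (Rk R k)"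
  by (simp add: word_op_Cons word_op_Nil)

lemma op_restrict_word_op[simp]:
  "op_restrict n m (word_op n m R w) = word_op n m R w" by (simp add: word_op_def)

lemma Rk_tensor_id:
  assumes "1 \<le> k" "Suc k \<le> p"
  shows "op_restrict n (p+q) (Rk R k) = op_restrict n (p+q) (op_tensor p (Rk R k) op_id)"
proof (rule op_restrict_cong)
  fix x y :: "nat list" assume len: "length x = p + q" "length y = p + q"
  obtain k' where k: "k = Suc k'" using assms by (cases k) auto
  have "(\<forall>i<length x. i \<noteq> k' \<and> i \<noteq> k \<longrightarrow> x ! i = y ! i) \<longleftrightarrow>
        (\<forall>i<p. i \<noteq> k' \<and> i \<noteq> k \<longrightarrow> x ! i = y ! i) \<and> drop p x = drop p y"
    using assms len k by (auto simp: all_less_add_iff list_eq_iff_nth_eq)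
  then show "Rk R k x y = op_tensor p (Rk R k) op_id x y"
    using assms len k by (auto simp: Rk_def emb2_def op_tensor_def op_id_def min_def)
qed

lemma Rk_id_tensor:
  assumes "1 \<le> k" "Suc k \<le> q"
  shows "op_restrict n (j+q) (Rk R (j+k)) = op_restrict n (j+q) (op_tensor j op_id (Rk R k))"
proof (rule op_restrict_cong)
  fix x y :: "nat list" assume len: "length x = j + q" "length y = j + q"
  obtain k' where k: "k = Suc k'" using assms by (cases k) auto
  have "(\<forall>i<length x. i \<noteq> j + k' \<and> i \<noteq> j + k \<longrightarrow> x ! i = y ! i) \<longleftrightarrow>
        take j x = take j y \<and> (\<forall>i<q. i \<noteq> k' \<and> i \<noteq> k \<longrightarrow> x ! (j + i) = y ! (j + i))"
    using len by (simp add: all_less_add_iff list_eq_iff_nth_eq)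
  then show "Rk R (j+k) x y = op_tensor j op_id (Rk R k) x y"
    using assms len k by (auto simp: Rk_def emb2_def op_tensor_def op_id_def)
qed

lemma word_op_extend:
  "set w \<subseteq> {1..<p} \<Longrightarrow>
   word_op n (p+q) R w = op_restrict n (p+q) (op_tensor p (word_op n p R w) op_id)"
proof (induction w)
  case Nil
  then show ?case by (simp add: word_op_Nil op_restrict_tensor_left op_tensor_id)
next
  case (Cons k w)
  then have "word_op n (p+q) R (k # w) =
      op_comp n (p+q) (op_tensor p (Rk R k) op_id) (op_tensor p (word_op n p R w) op_id)"
    unfolding word_op_Cons by (intro op_comp_cong) (simp_all add: Rk_tensor_id)
  then show ?case by (simp add: op_comp_tensor op_restrict_tensor_right word_op_Cons)
qed

lemma word_op_extend_Suc:
  "set w \<subseteq> {1..<p} \<Longrightarrow>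
   word_op n (Suc p) R w = op_restrict n (Suc p) (op_tensor p (word_op n p R w) op_id)"
  using word_op_extend[of w p n 1 R] by simp

lemma word_op_shift:
  "set w \<subseteq> {1..<q} \<Longrightarrow>
   word_op n (j+q) R (map ((+) j) w) = op_restrict n (j+q) (op_tensor j op_id (word_op n q R w))"
proof (induction w)
  case Nil
  then show ?case by (simp add: word_op_Nil op_restrict_tensor_right op_tensor_id)
next
  case (Cons k w)
  then have "word_op n (j+q) R (map ((+) j) (k # w)) =
      op_comp n (j+q) (op_tensor j op_id (Rk R k)) (op_tensor j op_id (word_op n q R w))"
    unfolding list.map word_op_Cons by (intro op_comp_cong) (simp_all add: Rk_id_tensor)
  then show ?case by (simp add: op_comp_tensor op_restrict_tensor_left word_op_Cons)
qed

definition braid_relation :: "nat \<Rightarrow> op \<Rightarrow> bool" where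
  "braid_relation n R \<longleftrightarrow> word_op n 3 R [1, 2, 1] = word_op n 3 R [2, 1, 2]"

lemma word_op_braid:
  assumes braid: "braid_relation n R" and k: "1 \<le> k" "Suc (Suc k) \<le> m"
  shows "word_op n m R [k, Suc k, k] = word_op n m R [Suc k, k, Suc k]"
proof -
  define j where "j = k - 1"
  define q where "q = m - j"
  have m: "m = j + q" and q: "3 + (q - 3) = q" using k by (simp_all add: j_def q_def)
  have ext: "word_op n q R w = op_restrict n q (op_tensor 3 (word_op n 3 R w) op_id)"
    if "set w \<subseteq> {1..<3}" for w
    using word_op_extend[OF that, of n "q - 3" R] by (simp only: q)
  have shift: "word_op n m R (map ((+) j) w) = op_restrict n m (op_tensor j op_id (word_op n q R w))"
    if "set w \<subseteq> {1..<q}" for w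
    unfolding m by (rule word_op_shift[OF that])
  have "word_op n q R [1, 2, 1] = word_op n q R [2, 1, 2]"
    using ext[of "[1, 2, 1]"] ext[of "[2, 1, 2]"] braid by (simp add: braid_relation_def)
  moreover have "[k, Suc k, k] = map ((+) j) [1, 2, 1]" "[Suc k, k, Suc k] = map ((+) j) [2, 1, 2]"
    using k by (simp_all add: j_def)
  ultimately show ?thesis
    using shift[of "[1, 2, 1]"] shift[of "[2, 1, 2]"] q by auto
qed

lemma op_comp_tensor_commute:
  "op_comp n (p+q) (op_tensor p A op_id) (op_tensor p op_id B) =
   op_comp n (p+q) (op_tensor p op_id B) (op_tensor p A op_id)"
  by (simp add: op_comp_tensor)

lemma word_op_distant:
  assumes "1 \<le> k" "Suc k < l" "Suc l \<le> m"
  shows "word_op n m R [k, l] = word_op n m R [l, k]"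
proof -
  define p where "p = Suc k"
  define q where "q = m - p"
  have m: "m = p + q" and l: "[l] = map ((+) p) [l - p]" using assms by (simp_all add: p_def q_def)
  have A: "word_op n m R [k] = op_restrict n m (op_tensor p (word_op n p R [k]) op_id)"
    unfolding m by (rule word_op_extend) (use assms in \<open>auto simp: p_def\<close>)
  have B: "word_op n m R [l] = op_restrict n m (op_tensor p op_id (word_op n q R [l - p]))"
    unfolding m l by (rule word_op_shift) (use assms in \<open>auto simp: p_def q_def\<close>)
  show ?thesis
    using word_op_append[of n m R "[k]" "[l]"] word_op_append[of n m R "[l]" "[k]"]
      op_comp_tensor_commute[of n p q "word_op n p R [k]" "word_op n q R [l - p]", folded m]
    by (simp add: A B)
qed

lemma word_op_braid_equiv:
  assumes braid: "braid_relation n R"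
  shows "braid_equiv u v \<Longrightarrow> set u \<subseteq> {1..<m} \<Longrightarrow> word_op n m R u = word_op n m R v"
proof (induction rule: braid_equiv.induct)
  case (braid_sym u v) then show ?case using braid_equiv_set by metis
next
  case (braid_trans u v w) then show ?case using braid_equiv_set by metis
next
  case (braid_ctxt u v p s) then show ?case by (simp add: word_op_append)
next
  case (braid_rel k) then show ?case using word_op_braid[OF braid, of k m] by auto
next
  case (braid_far k l) then show ?case using word_op_distant[of k l m n R] by auto
qed simp

lemma braid_relationI:
  assumes "op_eq n 3 (op_mult n 3 (op_mult n 3 (Rk R 1) (Rk R 2)) (Rk R 1))
                     (op_mult n 3 (op_mult n 3 (Rk R 2) (Rk R 1)) (Rk R 2))"
  shows "braid_relation n R"
proof -
  have "word_op n 3 R [a, b, c] = op_restrict n 3 (op_mult n 3 (op_mult n 3 (Rk R a) (Rk R b)) (Rk R c))"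
    for a b c
  proof -
    have "word_op n 3 R [a, b, c] = op_comp n 3 (op_comp n 3 (Rk R a) (Rk R b)) (Rk R c)"
      by (simp add: word_op_Cons word_op_Nil op_comp_assoc)
    also have "\<dots> = op_comp n 3 (op_mult n 3 (Rk R a) (Rk R b)) (Rk R c)"
      unfolding op_comp_def[of n 3 "Rk R a"] by simp
    finally show ?thesis by (simp only: op_comp_def)
  qed
  then show ?thesis using assms unfolding braid_relation_def op_eq_iff_restrict by simp
qed

lemma emb1_last_entry:
  assumes "length x = p" "length u = p"
  shows "emb1 (Suc p) D (x @ [a]) (u @ [c]) = (if x = u then D [a] [c] else 0)"
proof -
  have "(\<forall>j<Suc p. j \<noteq> p \<longrightarrow> (x @ [a]) ! j = (u @ [c]) ! j) = (x = u)"
    using assms by (auto simp: nth_append list_eq_iff_nth_eq less_Suc_eq)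
  then show ?thesis unfolding emb1_def using assms by (simp add: nth_append)
qed

lemma rtr_last_factor_entry:
  assumes x: "x \<in> idx n p" and y: "y \<in> idx n p"
  shows "rtr n (Suc p) D (Suc p) Y x y = (\<Sum>a<n. \<Sum>c<n. D [a] [c] * Y (x @ [c]) (y @ [a]))"
proof -
  have lx: "length x = p" and ly: "length y = p" using x y by (auto simp: length_idx)
  have "rtr n (Suc p) D (Suc p) Y x y = (\<Sum>a<n. op_mult n (Suc p) (emb1 (Suc p) D) Y (x @ [a]) (y @ [a]))"
    unfolding rtr_def ptr_def using lx ly by simp
  also have "\<dots> = (\<Sum>a<n. \<Sum>u\<in>idx n p. \<Sum>c<n. emb1 (Suc p) D (x @ [a]) (u @ [c]) * Y (u @ [c]) (y @ [a]))"
    unfolding op_mult_def sum_idx_snoc ..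
  also have "\<dots> = (\<Sum>a<n. \<Sum>u\<in>idx n p. \<Sum>c<n. if x = u then D [a] [c] * Y (u @ [c]) (y @ [a]) else 0)"
    by (intro sum.cong HOL.refl) (simp add: emb1_last_entry lx length_idx)
  also have "\<dots> = (\<Sum>a<n. \<Sum>u\<in>idx n p. if x = u then (\<Sum>c<n. D [a] [c] * Y (u @ [c]) (y @ [a])) else 0)"
    by (intro sum.cong HOL.refl) simp
  also have "\<dots> = (\<Sum>a<n. \<Sum>c<n. D [a] [c] * Y (x @ [c]) (y @ [a]))"
    using x by (simp add: finite_idx)
  finally show ?thesis .
qed

text \<open>Entrywise form of Tr_R(2) R_12 = I_1.\<close>

definition rtr_R_eq_id :: "nat \<Rightarrow> op \<Rightarrow> op \<Rightarrow> bool" where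
  "rtr_R_eq_id n D R \<longleftrightarrow>
     (\<forall>u<n. \<forall>v<n. (\<Sum>a<n. \<Sum>c<n. D [a] [c] * R [u, c] [v, a]) = (if u = v then 1 else 0))"

definition rtr_top :: "nat \<Rightarrow> nat \<Rightarrow> op \<Rightarrow> op \<Rightarrow> op" where
  "rtr_top n p D Y = op_restrict n p (rtr n (Suc p) D (Suc p) Y)"

lemma idx_snoc: "x \<in> idx n p \<Longrightarrow> c < n \<Longrightarrow> x @ [c] \<in> idx n (Suc p)"
  by (auto simp: idx_def)

lemma rtr_top_restrict[simp]: "rtr_top n p D (op_restrict n (Suc p) Y) = rtr_top n p D Y"
  unfolding rtr_top_def op_restrict_def[of n p]
  by (auto simp: fun_eq_iff rtr_last_factor_entry op_restrict_def idx_snoc intro!: sum.cong)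

lemma rtr_top_comp: "rtr_top n p D (op_comp n (Suc p) A B) = rtr_top n p D (op_mult n (Suc p) A B)"
  unfolding op_comp_def by simp

lemma op_restrict_rtr_top[simp]:
  "op_restrict n p (rtr_top n p D Y) = rtr_top n p D Y" by (simp add: rtr_top_def)

lemma sum_tensor_id_left:
  assumes "length x = p" "c < n"
  shows "(\<Sum>z\<in>idx n (Suc p). op_tensor p A op_id (x @ [c]) z * F z) = (\<Sum>u\<in>idx n p. A x u * F (u @ [c]))"
proof -
  have "(\<Sum>z\<in>idx n (Suc p). op_tensor p A op_id (x @ [c]) z * F z) =
        (\<Sum>u\<in>idx n p. \<Sum>e<n. op_tensor p A op_id (x @ [c]) (u @ [e]) * F (u @ [e]))" by (rule sum_idx_snoc)
  also have "\<dots> = (\<Sum>u\<in>idx n p. \<Sum>e<n. if c = e then A x u * F (u @ [c]) else 0)"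
    by (intro sum.cong HOL.refl) (auto simp: op_tensor_def op_id_def assms length_idx)
  also have "\<dots> = (\<Sum>u\<in>idx n p. A x u * F (u @ [c]))" using assms by simp
  finally show ?thesis .
qed

lemma sum_tensor_id_right:
  assumes "length y = p" "a < n"
  shows "(\<Sum>w\<in>idx n (Suc p). F w * op_tensor p B op_id w (y @ [a])) = (\<Sum>v\<in>idx n p. F (v @ [a]) * B v y)"
proof -
  have "(\<Sum>w\<in>idx n (Suc p). F w * op_tensor p B op_id w (y @ [a])) =
        (\<Sum>v\<in>idx n p. \<Sum>e<n. F (v @ [e]) * op_tensor p B op_id (v @ [e]) (y @ [a]))" by (rule sum_idx_snoc)
  also have "\<dots> = (\<Sum>v\<in>idx n p. \<Sum>e<n. if e = a then F (v @ [a]) * B v y else 0)"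
    by (intro sum.cong HOL.refl) (auto simp: op_tensor_def op_id_def assms length_idx)
  also have "\<dots> = (\<Sum>v\<in>idx n p. F (v @ [a]) * B v y)" using assms by simp
  finally show ?thesis .
qed

lemma rtr_top_tensor_left:
  "rtr_top n p D (op_mult n (Suc p) (op_tensor p A op_id) Y) = op_comp n p A (rtr_top n p D Y)"
proof (rule ext, rule ext)
  fix x y
  show "rtr_top n p D (op_mult n (Suc p) (op_tensor p A op_id) Y) x y = op_comp n p A (rtr_top n p D Y) x y"
  proof (cases "x \<in> idx n p \<and> y \<in> idx n p")
    case True
    then have lx: "length x = p" by (auto simp: length_idx)
    have "rtr_top n p D (op_mult n (Suc p) (op_tensor p A op_id) Y) x y =
      (\<Sum>a<n. \<Sum>c<n. D [a] [c] * (\<Sum>z\<in>idx n (Suc p). op_tensor p A op_id (x @ [c]) z * Y z (y @ [a])))"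
      using True by (simp add: rtr_top_def op_restrict_def rtr_last_factor_entry op_mult_def)
    also have "\<dots> = (\<Sum>a<n. \<Sum>c<n. D [a] [c] * (\<Sum>u\<in>idx n p. A x u * Y (u @ [c]) (y @ [a])))"
      by (intro sum.cong HOL.refl) (simp add: sum_tensor_id_left lx)
    also have "\<dots> = (\<Sum>a<n. \<Sum>c<n. \<Sum>u\<in>idx n p. A x u * (D [a] [c] * Y (u @ [c]) (y @ [a])))"
      by (simp add: sum_distrib_left mult_ac)
    also have "\<dots> = (\<Sum>u\<in>idx n p. \<Sum>a<n. \<Sum>c<n. A x u * (D [a] [c] * Y (u @ [c]) (y @ [a])))"
      by (simp add: sum.swap[of _ "idx n p"])
    also have "\<dots> = (\<Sum>u\<in>idx n p. A x u * rtr_top n p D Y u y)"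
      using True by (intro sum.cong HOL.refl) (simp add: rtr_top_def op_restrict_def rtr_last_factor_entry sum_distrib_left)
    also have "\<dots> = op_comp n p A (rtr_top n p D Y) x y"
      using True by (simp add: op_comp_def op_restrict_def op_mult_def)
    finally show ?thesis .
  next
    case False then show ?thesis by (auto simp: rtr_top_def op_comp_def op_restrict_def)
  qed
qed

lemma rtr_top_tensor_right:
  "rtr_top n p D (op_mult n (Suc p) Y (op_tensor p B op_id)) = op_comp n p (rtr_top n p D Y) B"
proof (rule ext, rule ext)
  fix x y
  show "rtr_top n p D (op_mult n (Suc p) Y (op_tensor p B op_id)) x y = op_comp n p (rtr_top n p D Y) B x y"
  proof (cases "x \<in> idx n p \<and> y \<in> idx n p")
    case True
    then have ly: "length y = p" by (auto simp: length_idx)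
    have "rtr_top n p D (op_mult n (Suc p) Y (op_tensor p B op_id)) x y =
      (\<Sum>a<n. \<Sum>c<n. D [a] [c] * (\<Sum>w\<in>idx n (Suc p). Y (x @ [c]) w * op_tensor p B op_id w (y @ [a])))"
      using True by (simp add: rtr_top_def op_restrict_def rtr_last_factor_entry op_mult_def)
    also have "\<dots> = (\<Sum>a<n. \<Sum>c<n. D [a] [c] * (\<Sum>v\<in>idx n p. Y (x @ [c]) (v @ [a]) * B v y))"
      by (intro sum.cong HOL.refl) (simp add: sum_tensor_id_right ly)
    also have "\<dots> = (\<Sum>a<n. \<Sum>c<n. \<Sum>v\<in>idx n p. (D [a] [c] * Y (x @ [c]) (v @ [a])) * B v y)"
      by (simp add: sum_distrib_left mult_ac)
    also have "\<dots> = (\<Sum>v\<in>idx n p. \<Sum>a<n. \<Sum>c<n. (D [a] [c] * Y (x @ [c]) (v @ [a])) * B v y)"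
      by (simp add: sum.swap[of _ "idx n p"])
    also have "\<dots> = (\<Sum>v\<in>idx n p. rtr_top n p D Y x v * B v y)"
      using True by (intro sum.cong HOL.refl) (simp add: rtr_top_def op_restrict_def rtr_last_factor_entry sum_distrib_right)
    also have "\<dots> = op_comp n p (rtr_top n p D Y) B x y"
      using True by (simp add: op_comp_def op_restrict_def op_mult_def)
    finally show ?thesis .
  next
    case False then show ?thesis by (auto simp: rtr_top_def op_comp_def op_restrict_def)
  qed
qed

lemma rtr_last_restrict:
  "op_restrict n q (rtr_last n (q+j) D j (op_restrict n (q+j) Y)) = op_restrict n q (rtr_last n (q+j) D j Y)"
proof (induction j arbitrary: Y)
  case (Suc j)
  have "op_restrict n q (rtr_last n (q+j) D j (rtr n (Suc (q+j)) D (Suc (q+j)) (op_restrict n (Suc (q+j)) Y))) =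
        op_restrict n q (rtr_last n (q+j) D j (rtr_top n (q+j) D (op_restrict n (Suc (q+j)) Y)))"
    unfolding rtr_top_def Suc.IH ..
  also have "\<dots> = op_restrict n q (rtr_last n (q+j) D j (rtr n (Suc (q+j)) D (Suc (q+j)) Y))"
    unfolding rtr_top_restrict unfolding rtr_top_def Suc.IH ..
  finally show ?case by simp
qed simp

lemma rtr_last_Suc_rtr_top:
  "op_restrict n q (rtr_last n (Suc (q+j)) D (Suc j) Y) =
   op_restrict n q (rtr_last n (q+j) D j (rtr_top n (q+j) D Y))"
  unfolding rtr_top_def rtr_last_restrict by simp

lemma rtr_top_bimodule:
  assumes "set w1 \<subseteq> {1..<p}" "set w2 \<subseteq> {1..<p}"
  shows "rtr_top n p D (op_comp n (Suc p) (word_op n (Suc p) R w1) (op_comp n (Suc p) Y (word_op n (Suc p) R w2))) =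
         op_comp n p (word_op n p R w1) (op_comp n p (rtr_top n p D Y) (word_op n p R w2))"
proof -
  have "op_comp n (Suc p) (word_op n (Suc p) R w1) (op_comp n (Suc p) Y (word_op n (Suc p) R w2)) =
        op_comp n (Suc p) (op_tensor p (word_op n p R w1) op_id)
          (op_comp n (Suc p) Y (op_tensor p (word_op n p R w2) op_id))"
    using assms by (simp add: word_op_extend_Suc)
  then show ?thesis by (simp add: rtr_top_comp rtr_top_tensor_left rtr_top_tensor_right)
qed

lemma rtr_last_bimodule:
  assumes w: "set w1 \<subseteq> {1..<q}" "set w2 \<subseteq> {1..<q}"
  shows "op_restrict n q (rtr_last n (q+j) D j
           (op_comp n (q+j) (word_op n (q+j) R w1) (op_comp n (q+j) Y (word_op n (q+j) R w2)))) =
         op_comp n q (word_op n q R w1) (op_comp n q (op_restrict n q (rtr_last n (q+j) D j Y)) (word_op n q R w2))"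
proof (induction j arbitrary: Y)
  case (Suc j)
  have w': "set w1 \<subseteq> {1..<q+j}" "set w2 \<subseteq> {1..<q+j}" using w by auto
  have "op_restrict n q (rtr_last n (Suc (q+j)) D (Suc j)
          (op_comp n (Suc (q+j)) (word_op n (Suc (q+j)) R w1) (op_comp n (Suc (q+j)) Y (word_op n (Suc (q+j)) R w2)))) =
        op_restrict n q (rtr_last n (q+j) D j
          (op_comp n (q+j) (word_op n (q+j) R w1) (op_comp n (q+j) (rtr_top n (q+j) D Y) (word_op n (q+j) R w2))))"
    by (simp only: rtr_last_Suc_rtr_top rtr_top_bimodule[OF w'])
  also have "\<dots> = op_comp n q (word_op n q R w1)
                     (op_comp n q (op_restrict n q (rtr_last n (q+j) D j (rtr_top n (q+j) D Y))) (word_op n q R w2))"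
    by (rule Suc.IH)
  also have "op_restrict n q (rtr_last n (q+j) D j (rtr_top n (q+j) D Y)) =
             op_restrict n q (rtr_last n (Suc (q+j)) D (Suc j) Y)"
    by (rule rtr_last_Suc_rtr_top[symmetric])
  finally show ?case by (simp only: add_Suc_right)
qed simp

lemma rtr_top_Rk:
  assumes unit: "rtr_R_eq_id n D R" and p: "1 \<le> p"
  shows "rtr_top n p D (Rk R p) = op_restrict n p op_id"
proof (rule ext, rule ext)
  fix x y
  show "rtr_top n p D (Rk R p) x y = op_restrict n p op_id x y"
  proof (cases "x \<in> idx n p \<and> y \<in> idx n p")
    case True
    then have lx: "length x = p" and ly: "length y = p" by (auto simp: length_idx)
    have xn: "x ! (p-1) < n" "y ! (p-1) < n" using True p by (auto simp: idx_def)
    define C where "C = (\<forall>j<Suc p. j \<noteq> p - 1 \<and> j \<noteq> Suc p - 1 \<longrightarrow> x ! j = y ! j)"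
    have e: "\<And>a c. Rk R p (x @ [c]) (y @ [a]) = R [x ! (p-1), c] [y ! (p-1), a] * (if C then 1 else 0)"
      unfolding Rk_def emb2_def C_def using lx ly p by (auto simp: nth_append intro!: arg_cong[where f="\<lambda>b. _ * (if b then 1 else 0)"])
    have "rtr_top n p D (Rk R p) x y = (\<Sum>a<n. \<Sum>c<n. D [a] [c] * R [x ! (p-1), c] [y ! (p-1), a]) * (if C then 1 else 0)"
      using True by (simp add: rtr_top_def op_restrict_def rtr_last_factor_entry e sum_distrib_right mult_ac)
    also have "\<dots> = (if x ! (p-1) = y ! (p-1) \<and> C then 1 else 0)"
      using unit xn unfolding rtr_R_eq_id_def by simp
    also have "(x ! (p-1) = y ! (p-1) \<and> C) = (x = y)"
    proof
      assume h: "x ! (p-1) = y ! (p-1) \<and> C"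
      show "x = y"
      proof (rule nth_equalityI)
        show "length x = length y" using lx ly by simp
        fix j assume "j < length x"
        then show "x ! j = y ! j" using h lx unfolding C_def by (cases "j = p - 1") auto
      qed
    next
      assume "x = y" then show "x ! (p-1) = y ! (p-1) \<and> C" by (simp add: C_def)
    qed
    finally show ?thesis using True by (simp add: op_restrict_def op_id_def)
  next
    case False then show ?thesis by (auto simp: rtr_top_def op_restrict_def)
  qed
qed

lemma rtr_top_word_op:
  assumes unit: "rtr_R_eq_id n D R"
    and p: "1 \<le> p" and w: "set w1 \<subseteq> {1..<p}" "set w2 \<subseteq> {1..<p}"
  shows "rtr_top n p D (word_op n (Suc p) R (w1 @ [p] @ w2)) = word_op n p R (w1 @ w2)"
proof -
  have "word_op n (Suc p) R (w1 @ [p] @ w2) =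
     op_comp n (Suc p) (op_tensor p (word_op n p R w1) op_id) (op_comp n (Suc p) (Rk R p) (op_tensor p (word_op n p R w2) op_id))"
    using w by (simp add: word_op_append word_op_Cons word_op_extend_Suc)
  then have "rtr_top n p D (word_op n (Suc p) R (w1 @ [p] @ w2)) =
     op_comp n p (word_op n p R w1) (rtr_top n p D (op_comp n (Suc p) (Rk R p) (op_tensor p (word_op n p R w2) op_id)))"
    by (simp add: rtr_top_comp rtr_top_tensor_left)
  also have "\<dots> = op_comp n p (word_op n p R w1) (op_comp n p (rtr_top n p D (Rk R p)) (word_op n p R w2))"
    by (simp add: rtr_top_comp rtr_top_tensor_right)
  also have "\<dots> = word_op n p R (w1 @ w2)"
    using rtr_top_Rk[OF unit p] by (simp add: word_op_append)
  finally show ?thesis .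
qed

lemma Ups_word_op: "op_restrict n m (Ups n m R k) = word_op n m R (ups_word k)"
proof (induction n m R k rule: Ups.induct)
  case (1 n m R) then show ?case by (simp add: word_op_Nil)
next
  case (2 n m R) then show ?case by (simp add: word_op_Nil)
next
  case (3 n m R k)
  have "op_restrict n m (Ups n m R (Suc (Suc k))) = op_comp n m (op_prod n m (map (Rk R) [1..<Suc (Suc k)])) (Ups n m R (Suc k))"
    by (simp add: op_comp_def)
  also have "\<dots> = op_comp n m (word_op n m R (asc 0 (Suc k))) (word_op n m R (ups_word (Suc k)))"
    by (metis "3" word_op_def op_comp_restrict_left op_comp_restrict_right One_nat_def asc_def plus_nat.add_0)
  finally show ?case by (simp add: word_op_append)
qed

lemma Jop_word_op: "op_restrict n m (Jop n m R k) = word_op n m R (J_word k)"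
proof (induction n m R k rule: Jop.induct)
  case (1 n m R) then show ?case by (simp add: word_op_Nil)
next
  case (2 n m R) then show ?case by (simp add: word_op_Nil)
next
  case (3 n m R k)
  have e: "op_comp n m (op_comp n m (Rk R (Suc k)) (Jop n m R (Suc k))) (Rk R (Suc k)) =
    op_restrict n m (op_mult n m (op_mult n m (Rk R (Suc k)) (Jop n m R (Suc k))) (Rk R (Suc k)))"
    by (metis op_comp_def op_comp_restrict_left)
  have "op_restrict n m (Jop n m R (Suc (Suc k))) = op_comp n m (op_comp n m (Rk R (Suc k)) (Jop n m R (Suc k))) (Rk R (Suc k))"
    unfolding e by simp
  also have "\<dots> = op_comp n m (op_comp n m (Rk R (Suc k)) (word_op n m R (J_word (Suc k)))) (word_op n m R [Suc k])"
    by (metis "3" word_op_single op_comp_restrict_left op_comp_restrict_right)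
  finally show ?case by (simp add: word_op_append word_op_Cons op_comp_assoc)
qed

lemma op_prod_word_op:
  "(\<And>x. x \<in> set xs \<Longrightarrow> op_restrict n m (f x) = word_op n m R (g x)) \<Longrightarrow>
   op_restrict n m (op_prod n m (map f xs)) = word_op n m R (concat (map g xs))"
proof (induction xs)
  case Nil then show ?case by (simp add: word_op_Nil)
next
  case (Cons x xs)
  have "op_restrict n m (op_prod n m (map f (x # xs))) = op_comp n m (f x) (op_prod n m (map f xs))"
    by (simp add: op_comp_def)
  also have "\<dots> = op_comp n m (word_op n m R (g x)) (word_op n m R (concat (map g xs)))"
    using Cons by (metis op_comp_restrict_left op_comp_restrict_right list.set_intros)
  finally show ?case by (simp add: word_op_append)
qed

lemma op_pow_word_op:
  "op_restrict n m A = word_op n m R w \<Longrightarrow> op_restrict n m (op_pow n m A j) = word_op n m R (word_pow w j)"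
proof (induction j)
  case 0 then show ?case by (simp add: word_op_Nil)
next
  case (Suc j)
  have "op_restrict n m (op_pow n m A (Suc j)) = op_comp n m A (op_pow n m A j)" by (simp add: op_comp_def)
  also have "\<dots> = op_comp n m (word_op n m R w) (word_op n m R (word_pow w j))"
    using Suc by (metis op_comp_restrict_left op_comp_restrict_right)
  finally show ?case by (simp add: word_op_append word_pow_def)
qed

text \<open>Tracing factor a+c+1 meets a single letter a+c of the crossing word, which
Tr_R(a+c+1) R_(a+c) = I removes; the rest of that block becomes one more factor of the power.\<close>

lemma rtr_last_cross_word:
  assumes unit: "rtr_R_eq_id n D R" and braid: "braid_relation n R" and a: "1 \<le> a"
  shows "op_restrict n a (rtr_last n (a+c) D c (word_op n (a+c) R (word_pow (asc c (a-1)) j @ cross_word a c))) =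
         word_op n a R (word_pow (asc 0 (a-1)) (j + c))"
proof (induction c arbitrary: j)
  case (Suc c)
  have s1: "set (asc c (a-1)) \<subseteq> {1..<a+c}" using a by (auto simp: set_asc)
  have s2: "set (word_pow (asc c (a-1)) j @ cross_word a c) \<subseteq> {1..<a+c}"
    using s1 set_word_pow[of "asc c (a-1)" j] set_cross_word[of a c] by auto
  have s3: "set (word_pow (asc (Suc c) (a-1)) j @ cross_word a (Suc c)) \<subseteq> {1..<Suc (a+c)}"
    using set_word_pow[of "asc (Suc c) (a-1)" j] set_cross_word[of a "Suc c"] a by (auto simp: set_asc)
  have "word_op n (Suc (a+c)) R (word_pow (asc (Suc c) (a-1)) j @ cross_word a (Suc c)) =
        word_op n (Suc (a+c)) R (asc c (a-1) @ [a+c] @ (word_pow (asc c (a-1)) j @ cross_word a c))"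
    by (rule word_op_braid_equiv[OF braid cross_word_Suc_equiv[OF a] s3])
  then have trace: "rtr_top n (a+c) D (word_op n (Suc (a+c)) R (word_pow (asc (Suc c) (a-1)) j @ cross_word a (Suc c))) =
                    word_op n (a+c) R (word_pow (asc c (a-1)) (Suc j) @ cross_word a c)"
    using rtr_top_word_op[OF unit _ s1 s2] a by (simp add: word_pow_def)
  have "op_restrict n a (rtr_last n (Suc (a+c)) D (Suc c)
          (word_op n (Suc (a+c)) R (word_pow (asc (Suc c) (a-1)) j @ cross_word a (Suc c)))) =
        word_op n a R (word_pow (asc 0 (a-1)) (Suc j + c))"
    unfolding rtr_last_Suc_rtr_top trace by (rule Suc.IH)
  then show ?case by (simp only: add_Suc_right add_Suc)
qed simp

lemma emb2_12_entry: "emb2 1 2 X [u, a, b] [z0, z1, z2] = (if z2 = b then X [u, a] [z0, z1] else 0)"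
proof -
  have "(\<forall>j<length [u, a, b]. j \<noteq> 1 - 1 \<and> j \<noteq> 2 - 1 \<longrightarrow> [u, a, b] ! j = [z0, z1, z2] ! j) = (z2 = b)"
    by (auto simp: less_Suc_eq numeral_2_eq_2)
  then show ?thesis unfolding emb2_def by simp
qed

lemma emb2_23_entry: "emb2 2 3 X [z0, z1, z2] [v, a, b] = (if z0 = v then X [z1, z2] [a, b] else 0)"
proof -
  have "(\<forall>j<length [z0, z1, z2]. j \<noteq> 2 - 1 \<and> j \<noteq> 3 - 1 \<longrightarrow> [z0, z1, z2] ! j = [v, a, b] ! j) = (z0 = v)"
    by (auto simp: less_Suc_eq numeral_2_eq_2)
  then show ?thesis unfolding emb2_def by simp
qed

lemma sum_idx_3: "(\<Sum>z\<in>idx n 3. f z) = (\<Sum>z0<n. \<Sum>z1<n. \<Sum>z2<n. f [z0, z1, z2])"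
  by (simp add: numeral_3_eq_3 sum_idx_Suc idx_0)

lemma sum_swap3:
  "(\<Sum>a\<in>A. \<Sum>c\<in>C. \<Sum>b\<in>B. f a c b) = (\<Sum>b\<in>B. \<Sum>c\<in>C. \<Sum>a\<in>A. f a c b)"
proof -
  have "(\<Sum>a\<in>A. \<Sum>c\<in>C. \<Sum>b\<in>B. f a c b) = (\<Sum>a\<in>A. \<Sum>b\<in>B. \<Sum>c\<in>C. f a c b)"
    by (intro sum.cong refl sum.swap)
  also have "\<dots> = (\<Sum>b\<in>B. \<Sum>a\<in>A. \<Sum>c\<in>C. f a c b)" by (rule sum.swap)
  also have "\<dots> = (\<Sum>b\<in>B. \<Sum>c\<in>C. \<Sum>a\<in>A. f a c b)"
    by (intro sum.cong refl sum.swap)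
  finally show ?thesis .
qed

lemma op_mult_emb2_entry:
  assumes "b < n" "v < n"
  shows "op_mult n 3 (emb2 1 2 R) (emb2 2 3 \<Psi>) [u, a, b] [v, a, b] = (\<Sum>z<n. R [u, a] [v, z] * \<Psi> [z, b] [a, b])"
proof -
  have "op_mult n 3 (emb2 1 2 R) (emb2 2 3 \<Psi>) [u, a, b] [v, a, b] =
        (\<Sum>z0<n. \<Sum>z1<n. \<Sum>z2<n. if z2 = b \<and> z0 = v then R [u, a] [z0, z1] * \<Psi> [z1, z2] [a, b] else 0)"
    unfolding op_mult_def sum_idx_3 emb2_12_entry emb2_23_entry by (intro sum.cong refl) simp
  also have "\<dots> = (\<Sum>z0<n. if z0 = v then (\<Sum>z1<n. R [u, a] [z0, z1] * \<Psi> [z1, b] [a, b]) else 0)"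
    using assms by (intro sum.cong refl) (auto simp: if_distrib)
  finally show ?thesis using assms by simp
qed

lemma skew_flip_entry:
  assumes skew: "op_eq n 2 (ptr n 2 (op_mult n 3 (emb2 1 2 R) (emb2 2 3 \<Psi>))) op_flip"
    and "u < n" "v < n" "b < n"
  shows "(\<Sum>a<n. \<Sum>z<n. R [u, a] [v, z] * \<Psi> [z, b] [a, b]) = (if u = b \<and> b = v then 1 else 0)"
proof -
  have "[u, b] \<in> idx n 2" "[v, b] \<in> idx n 2" using assms by (auto simp: idx_def)
  then have "ptr n 2 (op_mult n 3 (emb2 1 2 R) (emb2 2 3 \<Psi>)) [u, b] [v, b] = op_flip [u, b] [v, b]"
    using skew unfolding op_eq_def by blast
  then have "(\<Sum>a<n. op_mult n 3 (emb2 1 2 R) (emb2 2 3 \<Psi>) [u, a, b] [v, a, b]) =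
             (if u = b \<and> b = v then 1 else 0)"
    by (simp add: ptr_def op_flip_def)
  moreover have "(\<Sum>a<n. op_mult n 3 (emb2 1 2 R) (emb2 2 3 \<Psi>) [u, a, b] [v, a, b]) =
                 (\<Sum>a<n. \<Sum>z<n. R [u, a] [v, z] * \<Psi> [z, b] [a, b])"
    using assms by (intro sum.cong refl op_mult_emb2_entry)
  ultimately show ?thesis by simp
qed

text \<open>Summing the third factor of Tr_(2)(R_12 Psi_23) = P_13 gives Tr_R(2) R_12 on the left and
the identity on the right.\<close>

lemma rtr_R_eq_id_ptr:
  assumes skew: "op_eq n 2 (ptr n 2 (op_mult n 3 (emb2 1 2 R) (emb2 2 3 \<Psi>))) op_flip"
  shows "rtr_R_eq_id n (ptr n 2 \<Psi>) R"
  unfolding rtr_R_eq_id_def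
proof (intro allI impI)
  fix u v assume uv: "u < n" "v < n"
  have "(\<Sum>a<n. \<Sum>c<n. ptr n 2 \<Psi> [a] [c] * R [u, c] [v, a]) =
        (\<Sum>a<n. \<Sum>c<n. \<Sum>b<n. R [u, c] [v, a] * \<Psi> [a, b] [c, b])"
    by (simp add: ptr_def sum_distrib_left sum_distrib_right mult.commute)
  also have "\<dots> = (\<Sum>b<n. \<Sum>c<n. \<Sum>a<n. R [u, c] [v, a] * \<Psi> [a, b] [c, b])"
    by (rule sum_swap3)
  also have "\<dots> = (\<Sum>b<n. if b = u then (if u = v then 1 else 0) else 0)"
    using skew_flip_entry[OF skew uv] by (intro sum.cong refl) auto
  finally show "(\<Sum>a<n. \<Sum>c<n. ptr n 2 \<Psi> [a] [c] * R [u, c] [v, a]) = (if u = v then 1 else 0)"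
    using uv by simp
qed

lemma op_pow_Ups_4:
  "op_restrict n i (op_pow n i (Ups n i R i) 4) = word_op n i R (ups_word i @ ups_word i @ ups_word i @ ups_word i)"
  using op_pow_word_op[OF Ups_word_op, of n i R i 4] by (simp add: word_pow_def numeral_eq_Suc)

lemma op_pow_Ups_4_eq_Jprod_square:
  assumes braid: "braid_relation n R"
  shows "op_restrict n i (op_pow n i (Ups n i R i) 4) =
         op_restrict n i (op_pow n i (op_prod n i (map (Jop n i R) [1..<Suc i])) 2)"
proof -
  have "op_restrict n i (op_prod n i (map (Jop n i R) [1..<Suc i])) = word_op n i R (Jprod_word i)"
    unfolding Jprod_word_def by (rule op_prod_word_op) (rule Jop_word_op)
  moreover have "word_pow w 2 = w @ w" for w :: "nat list" by (simp add: word_pow_def numeral_eq_Suc)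
  ultimately have J: "op_restrict n i (op_pow n i (op_prod n i (map (Jop n i R) [1..<Suc i])) 2) =
                      word_op n i R (Jprod_word i @ Jprod_word i)"
    using op_pow_word_op by metis
  have "word_op n i R ((ups_word i @ ups_word i) @ (ups_word i @ ups_word i)) = word_op n i R (Jprod_word i @ Jprod_word i)"
    by (rule word_op_braid_equiv[OF braid braid_equiv_append[OF ups_word_square ups_word_square]])
      (use set_ups_word in auto)
  then show ?thesis unfolding op_pow_Ups_4 J by simp
qed

lemma rtr_last_Ups_double:
  assumes unit: "rtr_R_eq_id n D R" and braid: "braid_relation n R" and i: "1 \<le> i"
  shows "op_restrict n i (rtr_last n (2*i) D i (Ups n (2*i) R (2*i))) = op_restrict n i (op_pow n i (Ups n i R i) 4)"
proof -
  have ups: "set (ups_word i) \<subseteq> {1..<i}" by (rule set_ups_word)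
  have "word_op n (i+i) R (ups_word (i+i)) = word_op n (i+i) R (ups_word i @ cross_word i i @ ups_word i)"
    by (rule word_op_braid_equiv[OF braid ups_word_add_equiv]) (use set_ups_word[of "i+i"] in auto)
  then have "op_restrict n i (rtr_last n (2*i) D i (Ups n (2*i) R (2*i))) =
      op_restrict n i (rtr_last n (i+i) D i (op_comp n (i+i) (word_op n (i+i) R (ups_word i))
        (op_comp n (i+i) (word_op n (i+i) R (cross_word i i)) (word_op n (i+i) R (ups_word i)))))"
    using rtr_last_restrict[of n i i D "Ups n (i+i) R (i+i)"] by (simp add: mult_2 Ups_word_op word_op_append)
  also have "\<dots> = word_op n i R (ups_word i @ word_pow (asc 0 (i-1)) i @ ups_word i)"
    using rtr_last_cross_word[OF unit braid i, of i 0] by (simp add: rtr_last_bimodule[OF ups ups] word_op_append)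
  also have "\<dots> = word_op n i R (ups_word i @ (ups_word i @ ups_word i) @ ups_word i)"
    using ups set_word_pow[of "asc 0 (i-1)" i] i
    by (intro word_op_braid_equiv[OF braid] braid_equiv_append_left braid_equiv_append_right
        word_pow_asc_equiv_ups_square) (auto simp: set_asc)
  finally show ?thesis by (simp add: op_pow_Ups_4)
qed

theorem lemmaB3:
  fixes n :: nat and R \<Psi> :: op and i :: nat
  assumes invertible: "\<exists>Ri. op_eq n 2 (op_mult n 2 R Ri) op_id \<and> op_eq n 2 (op_mult n 2 Ri R) op_id"
    and braid: "op_eq n 3 (op_mult n 3 (op_mult n 3 (Rk R 1) (Rk R 2)) (Rk R 1))
                          (op_mult n 3 (op_mult n 3 (Rk R 2) (Rk R 1)) (Rk R 2))"
    and skew1: "op_eq n 2 (ptr n 2 (op_mult n 3 (emb2 1 2 R) (emb2 2 3 \<Psi>))) op_flip"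
    and skew2: "op_eq n 2 (ptr n 2 (op_mult n 3 (emb2 1 2 \<Psi>) (emb2 2 3 R))) op_flip"
    and i: "1 \<le> i"
  shows "op_eq n i (rtr_last n (2*i) (ptr n 2 \<Psi>) i (Ups n (2*i) R (2*i)))
                   (op_pow n i (Ups n i R i) 4)
       \<and> op_eq n i (op_pow n i (Ups n i R i) 4)
                   (op_pow n i (op_prod n i (map (Jop n i R) [1..<Suc i])) 2)"
  using rtr_last_Ups_double[OF rtr_R_eq_id_ptr[OF skew1] braid_relationI[OF braid] i]
    op_pow_Ups_4_eq_Jprod_square[OF braid_relationI[OF braid]]
  unfolding op_eq_iff_restrict by simp

end
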